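(* Let $p\geq 0$ be an integer, $T$ a tree, $H$ a connected graph with at least $p$ vertices, and $V\subseteq V(T(H))$ with $|OC(T,V)|\geq p$ and $V(T)\setminus OC(T,V)\neq\emptyset$. Then $T(H)$ has a matching of size $p$ each of whose edges has one end in $V$ and the other end outside $V$.
   Context: Graph $T(H)$: for a tree $T$ and a graph $H$ with $V(H)=\{1,\dots,m\}$, $T(H)$ has vertices $v^i$ ($v\in V(T)$, $1\le i\le m$); for each $v$, $v^1,\dots,v^m$ span a copy $H^v$ of $H$; and $u^iv^i$ is an edge for each $i$ whenever $uv\in E(T)$. $OC(T,V)=\{u\in V(T): V(H^u)\cap V\neq\emptyset\}$. *)

theory Defs
  imports Main
begin

type_synonym 'a ugraph = "'a set \<times> 'a set set"

definition verts :: "'a ugraph \<Rightarrow> 'a set" where "verts G = fst G"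
definition edges :: "'a ugraph \<Rightarrow> 'a set set" where "edges G = snd G"

definition graph :: "'a ugraph \<Rightarrow> bool" where
  "graph G \<longleftrightarrow> finite (verts G) \<and>
     (\<forall>e\<in>edges G. \<exists>u v. e = {u, v} \<and> u \<noteq> v \<and> u \<in> verts G \<and> v \<in> verts G)"

definition adj :: "'a ugraph \<Rightarrow> 'a \<Rightarrow> 'a \<Rightarrow> bool" where
  "adj G u v \<longleftrightarrow> {u, v} \<in> edges G"

definition connected :: "'a ugraph \<Rightarrow> bool" where
  "connected G \<longleftrightarrow> (\<forall>u\<in>verts G. \<forall>v\<in>verts G. (u, v) \<in> {(x, y). adj G x y}\<^sup>*)"

definition is_cycle :: "'a ugraph \<Rightarrow> 'a list \<Rightarrow> bool" where
  "is_cycle G cs \<longleftrightarrow> length cs \<ge> 3 \<and> distinct cs \<and> set cs \<subseteq> verts G \<and>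
     (\<forall>i < length cs - 1. adj G (cs ! i) (cs ! Suc i)) \<and> adj G (last cs) (hd cs)"

definition acyclic_graph :: "'a ugraph \<Rightarrow> bool" where
  "acyclic_graph G \<longleftrightarrow> (\<nexists>cs. is_cycle G cs)"

definition tree :: "'a ugraph \<Rightarrow> bool" where
  "tree T \<longleftrightarrow> graph T \<and> verts T \<noteq> {} \<and> connected T \<and> acyclic_graph T"

text \<open>The graph T(H), for H with vertex set {1..m}: vertex v^i is the pair (v, i).\<close>
definition TH :: "'a ugraph \<Rightarrow> nat ugraph \<Rightarrow> ('a \<times> nat) ugraph" where
  "TH T H = (verts T \<times> verts H,
     {{(v, i), (v, j)} | v i j. v \<in> verts T \<and> {i, j} \<in> edges H} \<union>
     {{(u, i), (v, i)} | u v i. {u, v} \<in> edges T \<and> i \<in> verts H})"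

definition OC :: "'a ugraph \<Rightarrow> ('a \<times> nat) set \<Rightarrow> 'a set" where
  "OC T V = {u \<in> verts T. \<exists>i. (u, i) \<in> V}"

definition matching :: "'a ugraph \<Rightarrow> 'a set set \<Rightarrow> bool" where
  "matching G M \<longleftrightarrow> M \<subseteq> edges G \<and> (\<forall>e\<in>M. \<forall>f\<in>M. e \<noteq> f \<longrightarrow> e \<inter> f = {})"

end

theory Submission
  imports Defs
begin

text \<open>Let \<open>z\<close> be a vertex of \<open>T\<close> whose copy \<open>H\<^sup>z\<close> misses \<open>V\<close>. If at least \<open>p\<close> layers
  \<open>T\<^sup>i\<close> meet \<open>V\<close>, each such layer is a connected copy of \<open>T\<close> containing \<open>z\<^sup>i \<notin> V\<close>, so it has an
  edge leaving \<open>V\<close>. Otherwise, as \<open>H\<close> has at least \<open>p\<close> vertices, some layer \<open>T\<^sup>b\<close> misses \<open>V\<close>;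
  then every copy \<open>H\<^sup>u\<close> with \<open>u \<in> OC(T,V)\<close> is connected, meets \<open>V\<close> and contains \<open>u\<^sup>b \<notin> V\<close>,
  so it has an edge leaving \<open>V\<close>. Edges chosen in distinct layers (resp. copies) are disjoint.\<close>

lemma rtrancl_exits_set:
  assumes "(a, b) \<in> {(x, y). R x y}\<^sup>*" "P a" "\<not> P b"
  shows "\<exists>x y. R x y \<and> P x \<and> \<not> P y"
  using assms by (induction rule: rtrancl_induct) auto

lemma connected_edge_leaving_set:
  assumes "connected G" "a \<in> verts G" "b \<in> verts G" "a \<in> S" "b \<notin> S"
  shows "\<exists>x y. {x, y} \<in> edges G \<and> x \<in> S \<and> y \<notin> S"
proof -
  have "(a, b) \<in> {(x, y). adj G x y}\<^sup>*"
    using assms(1-3) by (simp add: connected_def)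
  from rtrancl_exits_set[OF this, of "\<lambda>x. x \<in> S"] show ?thesis
    using assms(4,5) by (auto simp: adj_def)
qed

lemma matching_from_fibrewise_crossing_edges:
  fixes x y :: "'i \<Rightarrow> 'v" and fibre :: "'v \<Rightarrow> 'i"
  assumes "finite I" "p \<le> card I"
    and "\<And>i. i \<in> I \<Longrightarrow> {x i, y i} \<in> edges G"
    and "\<And>i. i \<in> I \<Longrightarrow> x i \<in> V \<and> y i \<notin> V"
    and "\<And>i. i \<in> I \<Longrightarrow> fibre (x i) = i \<and> fibre (y i) = i"
  shows "\<exists>M. matching G M \<and> card M = p \<and> finite M \<and> (\<forall>e\<in>M. card (e \<inter> V) = 1)"
proof -
  obtain S where S: "S \<subseteq> I" "card S = p"
    using obtain_subset_with_card_n[OF assms(2)] by blast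
  define M where "M = (\<lambda>i. {x i, y i}) ` S"
  have fibre_eq: "i = j"
    if ij: "i \<in> S" "j \<in> S" and meet: "{x i, y i} \<inter> {x j, y j} \<noteq> {}" for i j
  proof -
    obtain v where "v \<in> {x i, y i}" "v \<in> {x j, y j}"
      using meet by blast
    then have "fibre v = i" "fibre v = j"
      using ij S(1) assms(5) by auto
    then show ?thesis by simp
  qed
  have "inj_on (\<lambda>i. {x i, y i}) S"
    by (rule inj_onI) (use fibre_eq in blast)
  then have "card M = p"
    using S(2) by (simp add: M_def card_image)
  moreover have "finite M"
    using S(1) assms(1) finite_subset by (auto simp: M_def)
  moreover have "matching G M"
    using S(1) assms(3) fibre_eq by (fastforce simp: matching_def M_def)
  moreover have "card (e \<inter> V) = 1" if "e \<in> M" for e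
  proof -
    obtain i where "i \<in> S" "e = {x i, y i}"
      using \<open>e \<in> M\<close> by (auto simp: M_def)
    then have "e \<inter> V = {x i}"
      using S(1) assms(4) by auto
    then show ?thesis by simp
  qed
  ultimately show ?thesis by blast
qed

lemma layer_edge_TH:
  assumes "{u, v} \<in> edges T" "i \<in> verts H"
  shows "{(u, i), (v, i)} \<in> edges (TH T H)"
  using assms by (auto simp: TH_def edges_def)

lemma copy_edge_TH:
  assumes "v \<in> verts T" "{i, j} \<in> edges H"
  shows "{(v, i), (v, j)} \<in> edges (TH T H)"
  using assms by (auto simp: TH_def edges_def)

lemma matching_in_layers:
  assumes "connected T" "finite (snd ` V)" "V \<subseteq> verts T \<times> verts H"
    and "z \<in> verts T" "\<And>i. (z, i) \<notin> V"
    and "p \<le> card (snd ` V)"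
  shows "\<exists>M. matching (TH T H) M \<and> card M = p \<and> finite M \<and> (\<forall>e\<in>M. card (e \<inter> V) = 1)"
proof -
  have "\<exists>x y. {x, y} \<in> edges T \<and> (x, j) \<in> V \<and> (y, j) \<notin> V" if "j \<in> snd ` V" for j
  proof -
    obtain a where "(a, j) \<in> V"
      using \<open>j \<in> snd ` V\<close> by force
    then show ?thesis
      using connected_edge_leaving_set[OF assms(1), of a z "{u. (u, j) \<in> V}"] assms(3-5)
      by auto
  qed
  then obtain x y where xy: "\<And>j. j \<in> snd ` V \<Longrightarrow>
      {x j, y j} \<in> edges T \<and> (x j, j) \<in> V \<and> (y j, j) \<notin> V"
    by metis
  have "j \<in> verts H" if "j \<in> snd ` V" for j
    using that assms(3) by auto
  with xy show ?thesis
    by (intro matching_from_fibrewise_crossing_edges[where I = "snd ` V" and fibre = snd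
          and x = "\<lambda>j. (x j, j)" and y = "\<lambda>j. (y j, j)"] assms(2,6))
      (auto intro: layer_edge_TH)
qed

lemma matching_in_copies:
  assumes "connected H" "finite (fst ` V)" "V \<subseteq> verts T \<times> verts H"
    and "b \<in> verts H" "\<And>u. (u, b) \<notin> V"
    and "p \<le> card (fst ` V)"
  shows "\<exists>M. matching (TH T H) M \<and> card M = p \<and> finite M \<and> (\<forall>e\<in>M. card (e \<inter> V) = 1)"
proof -
  have "\<exists>c d. {c, d} \<in> edges H \<and> (u, c) \<in> V \<and> (u, d) \<notin> V" if "u \<in> fst ` V" for u
  proof -
    obtain a where "(u, a) \<in> V"
      using \<open>u \<in> fst ` V\<close> by force
    then show ?thesis
      using connected_edge_leaving_set[OF assms(1), of a b "{i. (u, i) \<in> V}"] assms(3-5)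
      by auto
  qed
  then obtain c d where cd: "\<And>u. u \<in> fst ` V \<Longrightarrow>
      {c u, d u} \<in> edges H \<and> (u, c u) \<in> V \<and> (u, d u) \<notin> V"
    by metis
  have "u \<in> verts T" if "u \<in> fst ` V" for u
    using that assms(3) by auto
  with cd show ?thesis
    by (intro matching_from_fibrewise_crossing_edges[where I = "fst ` V" and fibre = fst
          and x = "\<lambda>u. (u, c u)" and y = "\<lambda>u. (u, d u)"] assms(2,6))
      (auto intro: copy_edge_TH)
qed

theorem lemma7:
  fixes p m :: nat and T :: "'a ugraph" and H :: "nat ugraph" and V :: "('a \<times> nat) set"
  assumes "tree T"
    and "graph H" and "verts H = {1..m}" and "connected H" and "m \<ge> p"
    and "V \<subseteq> verts (TH T H)"
    and "card (OC T V) \<ge> p"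
    and "verts T - OC T V \<noteq> {}"
  shows "\<exists>M. matching (TH T H) M \<and> card M = p \<and> finite M \<and>
             (\<forall>e\<in>M. card (e \<inter> V) = 1)"
proof -
  have V_sub: "V \<subseteq> verts T \<times> verts H"
    using assms(6) by (simp add: TH_def verts_def)
  have "finite V"
    using V_sub assms(1,3) finite_subset by (fastforce simp: tree_def graph_def)
  have OC_eq: "OC T V = fst ` V"
    using V_sub by (force simp: OC_def)
  obtain z where z: "z \<in> verts T" "\<And>i. (z, i) \<notin> V"
    using assms(8) by (auto simp: OC_def)
  show ?thesis
  proof (cases "p \<le> card (snd ` V)")
    case True
    have "connected T"
      using assms(1) by (simp add: tree_def)
    from matching_in_layers[OF this finite_imageI[OF \<open>finite V\<close>] V_sub z True]
    show ?thesis .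
  next
    case False
    then have "card (snd ` V) < card (verts H)"
      using assms(3,5) by simp
    then have "\<not> verts H \<subseteq> snd ` V"
      using card_mono[OF finite_imageI[OF \<open>finite V\<close>]] by (meson not_le)
    then obtain b where b: "b \<in> verts H" "b \<notin> snd ` V"
      by blast
    then have "(u, b) \<notin> V" for u
      by (metis image_eqI snd_conv)
    from matching_in_copies[OF assms(4) finite_imageI[OF \<open>finite V\<close>] V_sub b(1) this]
    show ?thesis
      using assms(7) OC_eq by simp
  qed
qed

end
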